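(* Let $c(x,\bar y)=\frac{\langle x,y\rangle}{y_{n+1}}$ for $x\in\mathbb{R}^n$, $\bar y=(y,y_{n+1})\in\mathbb{S}^n_-$. (1) A subset $\Omega^*\subset\mathbb{S}^n_-$ is $c^*$-convex with respect to any $\Omega\subset\mathbb{R}^n$ if and only if it is a geodesically convex subset of $\mathbb{S}^n_-$. (2) A subset $\Omega\subset\mathbb{R}^n$ is $c$-convex with respect to any $\Omega^*\subset\mathbb{S}^n_-$ if and only if it is a convex subset of $\mathbb{R}^n$.
   Context: $\mathbb{S}^n_-=\{\bar y\in\mathbb{S}^n\mid y_{n+1}<0\}$. $\Omega^*$ is $c^*$-convex with respect to $\Omega$ if for every $x\in\Omega$ the set $-D_xc(x,\Omega^* )=\{-y/y_{n+1}\mid\bar y\in\Omega^*\}$ is a convex subset of $\mathbb{R}^n$. $\Omega$ is $c$-convex with respect to $\Omega^*$ if for every $\bar y\in\Omega^*$ the set $-D_{\bar y}c(\Omega,\bar y)$ is a convex subset of the tangent space $T_{\bar y}\mathbb{S}^n$. Geodesically convex means any two points of the set are joined by a minimizing great-circle arc lying in the set. *)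

theory Defs
  imports "HOL-Analysis.Analysis"
begin

text \<open>Points of R^n are of type real^'n; points of R^(n+1) are pairs (y, y_{n+1})
  of type (real^'n) \<times> real with the product inner product.\<close>

definition S_minus :: "((real^'n) \<times> real) set" where
  "S_minus = {yb. norm yb = 1 \<and> snd yb < 0}"

definition cost :: "real^'n \<Rightarrow> (real^'n) \<times> real \<Rightarrow> real" where
  "cost x yb = inner x (fst yb) / snd yb"

definition grad_of :: "('a::real_inner \<Rightarrow> real) \<Rightarrow> 'a \<Rightarrow> 'a" where
  "grad_of f x = (THE g. (f has_derivative (\<lambda>h. inner g h)) (at x))"

definition tang_proj :: "'a::real_inner \<Rightarrow> 'a \<Rightarrow> 'a" where
  "tang_proj yb v = v - inner v yb *\<^sub>R yb"

definition Dx_cost :: "real^'n \<Rightarrow> (real^'n) \<times> real \<Rightarrow> real^'n" where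
  "Dx_cost x yb = grad_of (\<lambda>z. cost z yb) x"

text \<open>D_yb c(x, yb): Riemannian gradient on the sphere, i.e. the tangential
  projection of the ambient gradient of the natural extension of c(x, .).\<close>
definition Dy_cost :: "real^'n \<Rightarrow> (real^'n) \<times> real \<Rightarrow> (real^'n) \<times> real" where
  "Dy_cost x yb = tang_proj yb (grad_of (\<lambda>zb. cost x zb) yb)"

definition c_star_convex :: "((real^'n) \<times> real) set \<Rightarrow> (real^'n) set \<Rightarrow> bool" where
  "c_star_convex Oms Om \<longleftrightarrow> (\<forall>x\<in>Om. convex ((\<lambda>yb. - Dx_cost x yb) ` Oms))"

definition c_convex :: "(real^'n) set \<Rightarrow> ((real^'n) \<times> real) set \<Rightarrow> bool" where
  "c_convex Om Oms \<longleftrightarrow> (\<forall>yb\<in>Oms. convex ((\<lambda>x. - Dy_cost x yb) ` Om))"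

definition min_gc_arc :: "'a::real_inner \<Rightarrow> 'a \<Rightarrow> 'a set \<Rightarrow> bool" where
  "min_gc_arc a b A \<longleftrightarrow>
     (\<exists>u \<theta>. norm u = 1 \<and> inner a u = 0 \<and> \<theta> = arccos (inner a b) \<and>
        b = cos \<theta> *\<^sub>R a + sin \<theta> *\<^sub>R u \<and>
        A = {cos t *\<^sub>R a + sin t *\<^sub>R u | t. 0 \<le> t \<and> t \<le> \<theta>})"

definition geod_convex :: "'a::real_inner set \<Rightarrow> bool" where
  "geod_convex S \<longleftrightarrow> S \<subseteq> sphere 0 1 \<and>
     (\<forall>a\<in>S. \<forall>b\<in>S. \<exists>A. min_gc_arc a b A \<and> A \<subseteq> S)"

end

theory Submission
  imports Defs
begin

(* -D_x c(x, (y, y_{n+1})) = -y / y_{n+1} does not depend on x: it is the gnomonic (central)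
   projection of the lower hemisphere onto R^n.  This projection is injective and maps the
   minimizing great-circle arc between two points onto the segment between their images, so
   Omega* is geodesically convex exactly when its image is convex.  On the other side,
   -D_yb c(x, yb) is an injective linear function of x, hence preserves and reflects convexity. *)

lemma grad_of_eqI:
  assumes "(f has_derivative (\<lambda>h. inner g h)) (at x)"
  shows "grad_of f x = g"
  unfolding grad_of_def
proof (rule the_equality)
  show "(f has_derivative (\<lambda>h. inner g h)) (at x)" by (rule assms)
  fix g' assume "(f has_derivative (\<lambda>h. inner g' h)) (at x)"
  from has_derivative_unique[OF this assms] have "\<And>h. inner g' h = inner g h" by metis
  hence "inner (g' - g) (g' - g) = 0" by (simp add: inner_diff_left)
  thus "g' = g" by simp
qed

definition gnomonic :: "'a::real_vector \<times> real \<Rightarrow> 'a" where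
  "gnomonic p = (-1 / snd p) *\<^sub>R fst p"

lemma neg_Dx_cost_eq_gnomonic: "- Dx_cost x yb = gnomonic yb"
proof -
  let ?g = "(1 / snd yb) *\<^sub>R fst yb"
  have "(\<lambda>z. cost z yb) = inner ?g"
    by (auto simp: cost_def inner_commute divide_inverse)
  moreover have "(inner ?g has_derivative inner ?g) (at x)"
    by (rule bounded_linear_imp_has_derivative, rule bounded_linear_inner_right)
  ultimately have "Dx_cost x yb = ?g"
    unfolding Dx_cost_def by (simp add: grad_of_eqI)
  thus ?thesis by (simp add: gnomonic_def)
qed

lemma Dy_cost_eq:
  assumes "snd yb \<noteq> 0"
  shows "Dy_cost x yb = ((1 / snd yb) *\<^sub>R x, - inner x (fst yb) / (snd yb)\<^sup>2)"
proof -
  obtain y s where yb: "yb = (y, s)" by (cases yb)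
  have s: "s \<noteq> 0" using assms yb by simp
  let ?g = "((1 / s) *\<^sub>R x, - inner x y / s\<^sup>2)"
  have "((\<lambda>zb. cost x zb) has_derivative inner ?g) (at yb)"
    unfolding cost_def yb
    by (rule has_derivative_eq_rhs, (rule derivative_eq_intros | simp add: s)+)
       (simp add: fun_eq_iff inner_prod_def field_simps power2_eq_square inner_commute)
  hence "grad_of (\<lambda>zb. cost x zb) yb = ?g" by (rule grad_of_eqI)
  moreover have "inner ?g yb = 0"
    using s by (simp add: yb inner_prod_def field_simps power2_eq_square inner_commute)
  ultimately show ?thesis unfolding Dy_cost_def tang_proj_def using yb by simp
qed

lemma convex_neg_Dy_cost_image_iff:
  fixes yb :: "(real^'n) \<times> real"
  assumes "snd yb \<noteq> 0"
  shows "convex ((\<lambda>x. - Dy_cost x yb) ` Om) \<longleftrightarrow> convex Om"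
proof -
  define L where "L x = ((-1 / snd yb) *\<^sub>R x, inner x (fst yb) / (snd yb)\<^sup>2)" for x
  have "(\<lambda>x. - Dy_cost x yb) = L"
    by (rule ext) (simp add: Dy_cost_eq[OF assms] L_def)
  moreover have "linear L"
    unfolding L_def by (rule linearI) (auto simp: algebra_simps add_divide_distrib)
  moreover have "inj L"
    by (rule injI) (use assms in \<open>auto simp: L_def\<close>)
  ultimately show ?thesis by simp
qed

lemma abs_inner_less_one:
  fixes a b :: "'a::real_inner"
  assumes a: "norm a = 1" and b: "norm b = 1" and "a \<noteq> b" "a \<noteq> - b"
  shows "\<bar>inner a b\<bar> < 1"
proof -
  have aa: "inner a a = 1" and bb: "inner b b = 1"
    using a b by (simp_all add: norm_eq_sqrt_inner)
  have "inner (a - b) (a - b) = 2 - 2 * inner a b" "inner (a + b) (a + b) = 2 + 2 * inner a b"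
    using aa bb by (simp_all add: inner_diff_left inner_diff_right inner_add_right inner_commute)
  moreover have "0 < inner (a - b) (a - b)" "0 < inner (a + b) (a + b)"
    using assms(3,4) by (auto simp: add_eq_0_iff2)
  ultimately show ?thesis by (simp add: abs_less_iff)
qed

lemma norm_cos_sin_scaleR:
  assumes "norm a = 1" "norm u = 1" "inner a u = 0"
  shows "norm (cos t *\<^sub>R a + sin t *\<^sub>R u) = 1"
proof -
  have "inner a a = 1" "inner u u = 1" using assms by (simp_all add: norm_eq_sqrt_inner)
  hence "inner (cos t *\<^sub>R a + sin t *\<^sub>R u) (cos t *\<^sub>R a + sin t *\<^sub>R u) = (cos t)\<^sup>2 + (sin t)\<^sup>2"
    using assms(3) by (simp add: inner_add_left inner_add_right inner_commute power2_eq_square)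
  thus ?thesis by (simp add: norm_eq_sqrt_inner)
qed

lemma cos_sin_scaleR_eq:
  fixes a b u :: "'a::real_vector"
  assumes "b = cos \<theta> *\<^sub>R a + sin \<theta> *\<^sub>R u" "sin \<theta> \<noteq> 0"
  shows "cos t *\<^sub>R a + sin t *\<^sub>R u = (sin (\<theta> - t) / sin \<theta>) *\<^sub>R a + (sin t / sin \<theta>) *\<^sub>R b"
proof -
  have u: "u = (1 / sin \<theta>) *\<^sub>R (b - cos \<theta> *\<^sub>R a)" using assms by simp
  have "cos t - sin t * cos \<theta> / sin \<theta> = sin (\<theta> - t) / sin \<theta>"
    using assms(2) by (simp add: sin_diff field_simps)
  moreover have "cos t *\<^sub>R a + sin t *\<^sub>R u
      = (cos t - sin t * cos \<theta> / sin \<theta>) *\<^sub>R a + (sin t / sin \<theta>) *\<^sub>R b"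
    unfolding u by (simp add: algebra_simps)
  ultimately show ?thesis by simp
qed

definition slerp :: "'a::real_inner \<Rightarrow> 'a \<Rightarrow> real \<Rightarrow> 'a" where
  "slerp a b t = (sin (arccos (inner a b) - t) / sin (arccos (inner a b))) *\<^sub>R a
                 + (sin t / sin (arccos (inner a b))) *\<^sub>R b"

lemma min_gc_arc_iff_slerp:
  fixes a b :: "'a::real_inner"
  assumes a: "norm a = 1" and b: "norm b = 1" and ab: "\<bar>inner a b\<bar> < 1"
  shows "min_gc_arc a b A \<longleftrightarrow> A = slerp a b ` {0..arccos (inner a b)}"
proof -
  define \<theta> where "\<theta> = arccos (inner a b)"
  have sin_\<theta>: "sin \<theta> \<noteq> 0"
    using ab by (simp add: \<theta>_def sin_arccos_nonzero abs_less_iff)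
  have arc_eq: "{cos t *\<^sub>R a + sin t *\<^sub>R u | t. 0 \<le> t \<and> t \<le> \<theta>} = slerp a b ` {0..\<theta>}"
    if "b = cos \<theta> *\<^sub>R a + sin \<theta> *\<^sub>R u" for u
  proof -
    have "cos t *\<^sub>R a + sin t *\<^sub>R u = slerp a b t" for t
      using cos_sin_scaleR_eq[OF that sin_\<theta>] by (simp add: slerp_def \<theta>_def)
    hence "{cos t *\<^sub>R a + sin t *\<^sub>R u | t. 0 \<le> t \<and> t \<le> \<theta>} = {slerp a b t | t. 0 \<le> t \<and> t \<le> \<theta>}"
      by simp
    also have "\<dots> = slerp a b ` {0..\<theta>}" by auto
    finally show ?thesis .
  qed
  show ?thesis
    unfolding \<theta>_def[symmetric]
  proof
    assume "min_gc_arc a b A"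
    then obtain u where "b = cos \<theta> *\<^sub>R a + sin \<theta> *\<^sub>R u"
      and "A = {cos t *\<^sub>R a + sin t *\<^sub>R u | t. 0 \<le> t \<and> t \<le> \<theta>}"
      unfolding min_gc_arc_def \<theta>_def by blast
    with arc_eq show "A = slerp a b ` {0..\<theta>}" by blast
  next
    assume A: "A = slerp a b ` {0..\<theta>}"
    define u where "u = (1 / sin \<theta>) *\<^sub>R (b - inner a b *\<^sub>R a)"
    have aa: "inner a a = 1" and bb: "inner b b = 1"
      using a b by (simp_all add: norm_eq_sqrt_inner)
    have "(inner a b)\<^sup>2 \<le> 1" using ab by (simp add: abs_square_le_1)
    hence cos_\<theta>: "cos \<theta> = inner a b" and sin2_\<theta>: "(sin \<theta>)\<^sup>2 = 1 - (inner a b)\<^sup>2"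
      using ab by (simp_all add: \<theta>_def sin_arccos_abs)
    have "inner (b - inner a b *\<^sub>R a) (b - inner a b *\<^sub>R a) = (sin \<theta>)\<^sup>2"
      using aa bb sin2_\<theta>
      by (simp add: inner_diff_left inner_diff_right inner_commute power2_eq_square)
    hence "norm (b - inner a b *\<^sub>R a) = \<bar>sin \<theta>\<bar>" by (simp add: norm_eq_sqrt_inner)
    hence "norm u = 1" using sin_\<theta> by (simp add: u_def)
    moreover have "inner a u = 0" using aa by (simp add: u_def inner_diff_right)
    moreover have b_eq: "b = cos \<theta> *\<^sub>R a + sin \<theta> *\<^sub>R u"
      using sin_\<theta> by (simp add: u_def cos_\<theta>)
    moreover have "A = {cos t *\<^sub>R a + sin t *\<^sub>R u | t. 0 \<le> t \<and> t \<le> \<theta>}"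
      using A arc_eq[OF b_eq] by simp
    ultimately show "min_gc_arc a b A"
      unfolding min_gc_arc_def using \<theta>_def by blast
  qed
qed

lemma min_gc_arc_refl:
  fixes a :: "'a::euclidean_space"
  assumes "2 \<le> DIM('a)" and a: "norm a = 1"
  shows "min_gc_arc a a {a}"
proof -
  obtain v where v: "v \<noteq> 0" "orthogonal a v"
    using orthogonal_to_vector_exists assms(1) by blast
  show ?thesis
    unfolding min_gc_arc_def
  proof (intro exI conjI)
    show "norm (v /\<^sub>R norm v) = 1" "inner a (v /\<^sub>R norm v) = 0"
      using v by (simp_all add: orthogonal_def)
    show "0 = arccos (inner a a)" using a by (simp add: norm_eq_sqrt_inner)
    show "a = cos 0 *\<^sub>R a + sin 0 *\<^sub>R (v /\<^sub>R norm v)" by simp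
    show "{a} = {cos t *\<^sub>R a + sin t *\<^sub>R (v /\<^sub>R norm v) | t. 0 \<le> t \<and> t \<le> 0}"
      by (auto intro!: exI[of _ 0])
  qed
qed

lemma min_gc_arc_subset_sphere:
  assumes "norm a = 1" "min_gc_arc a b A"
  shows "A \<subseteq> sphere 0 1"
  using assms norm_cos_sin_scaleR unfolding min_gc_arc_def by fastforce

lemma geod_convex_iff_slerp:
  fixes S :: "'a::euclidean_space set"
  assumes "2 \<le> DIM('a)" and S: "S \<subseteq> sphere 0 1" and no_antipodes: "\<forall>a\<in>S. - a \<notin> S"
  shows "geod_convex S \<longleftrightarrow> (\<forall>a\<in>S. \<forall>b\<in>S. a \<noteq> b \<longrightarrow> slerp a b ` {0..arccos (inner a b)} \<subseteq> S)"
proof -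
  have arc_iff: "min_gc_arc a b A \<longleftrightarrow> A = slerp a b ` {0..arccos (inner a b)}"
    if "a \<in> S" "b \<in> S" "a \<noteq> b" for a b A
    using that S no_antipodes
    by (intro min_gc_arc_iff_slerp abs_inner_less_one) (auto simp: subset_iff)
  have "\<exists>A. min_gc_arc a a A \<and> A \<subseteq> S" if "a \<in> S" for a
    using that S min_gc_arc_refl[OF assms(1)] by (intro exI[of _ "{a}"]) auto
  with arc_iff S show ?thesis
    unfolding geod_convex_def by metis
qed

lemma uminus_notin_S_minus: "a \<in> S_minus \<Longrightarrow> - a \<notin> S_minus"
  by (simp add: S_minus_def)

lemma abs_inner_less_one_S_minus:
  assumes "a \<in> S_minus" "b \<in> S_minus" "a \<noteq> b"
  shows "\<bar>inner a b\<bar> < 1"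
  using assms uminus_notin_S_minus[of b]
  by (intro abs_inner_less_one) (auto simp: S_minus_def)

lemma inj_on_gnomonic_S_minus: "inj_on gnomonic (S_minus :: ((real^'n) \<times> real) set)"
proof
  fix p q :: "(real^'n) \<times> real" assume p: "p \<in> S_minus" and q: "q \<in> S_minus" and eq: "gnomonic p = gnomonic q"
  obtain y s where py: "p = (y, s)" by (cases p)
  obtain z t where qz: "q = (z, t)" by (cases q)
  have s: "s < 0" "(norm y)\<^sup>2 + s\<^sup>2 = 1" using p py by (auto simp: S_minus_def norm_Pair)
  have t: "t < 0" "(norm z)\<^sup>2 + t\<^sup>2 = 1" using q qz by (auto simp: S_minus_def norm_Pair)
  define f where "f = gnomonic p"
  have y: "y = (- s) *\<^sub>R f" using s by (simp add: f_def gnomonic_def py)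
  have z: "z = (- t) *\<^sub>R f" using t eq by (simp add: f_def gnomonic_def qz)
  \<comment> \<open>the last coordinate is determined by the image through \<open>|p| = 1\<close>\<close>
  have "s\<^sup>2 * (1 + (norm f)\<^sup>2) = 1" "t\<^sup>2 * (1 + (norm f)\<^sup>2) = 1"
    using s(2) t(2) y z by (simp_all add: algebra_simps)
  hence "s\<^sup>2 = t\<^sup>2" by (metis mult_right_cancel add_pos_nonneg zero_less_one zero_le_power2 less_irrefl)
  hence "s = t" using s t power2_eq_iff[of s t] by auto
  thus "p = q" using py qz y z by simp
qed

lemma gnomonic_add_scaleR:
  assumes "snd a \<noteq> 0" "snd b \<noteq> 0" "l * snd a + m * snd b \<noteq> 0"
  shows "gnomonic (l *\<^sub>R a + m *\<^sub>R b)
           = (1 - m * snd b / (l * snd a + m * snd b)) *\<^sub>R gnomonic a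
             + (m * snd b / (l * snd a + m * snd b)) *\<^sub>R gnomonic b"
proof -
  define d where "d = l * snd a + m * snd b"
  have "d \<noteq> 0" using assms(3) d_def by simp
  hence "(1 - m * snd b / d) * (-1 / snd a) = - l / d" "(m * snd b / d) * (-1 / snd b) = - m / d"
    using assms(1,2) unfolding d_def by (simp_all add: field_simps)
  moreover have "gnomonic (l *\<^sub>R a + m *\<^sub>R b) = (- l / d) *\<^sub>R fst a + (- m / d) *\<^sub>R fst b"
    by (simp add: gnomonic_def d_def scaleR_add_right)
  ultimately show ?thesis
    unfolding d_def[symmetric] gnomonic_def scaleR_scaleR by simp
qed

lemma slerp_in_S_minus:
  assumes a: "a \<in> S_minus" and b: "b \<in> S_minus" and "a \<noteq> b"
    and t: "0 \<le> t" "t \<le> arccos (inner a b)"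
  shows "slerp a b t \<in> S_minus"
proof -
  define \<theta> where "\<theta> = arccos (inner a b)"
  have ab: "\<bar>inner a b\<bar> < 1" using abs_inner_less_one_S_minus assms by blast
  hence \<theta>: "0 < \<theta>" "\<theta> < pi" using arccos_lt_bounded by (auto simp: \<theta>_def abs_less_iff)
  hence sin_\<theta>: "0 < sin \<theta>" by (simp add: sin_gt_zero)
  define l where "l = sin (\<theta> - t) / sin \<theta>"
  define m where "m = sin t / sin \<theta>"
  have t_le: "t \<le> \<theta>" using t by (simp add: \<theta>_def)
  have "0 \<le> l" "0 \<le> m" using t(1) t_le \<theta> sin_\<theta> by (simp_all add: l_def m_def sin_ge_zero)
  moreover have "0 < l \<or> 0 < m"
  proof (cases "t = 0")
    case True
    then show ?thesis using sin_\<theta> by (simp add: l_def)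
  next
    case False
    then have "0 < sin t" using t(1) t_le \<theta> by (simp add: sin_gt_zero)
    then show ?thesis using sin_\<theta> by (simp add: m_def)
  qed
  moreover have "snd a < 0" "snd b < 0" using a b by (simp_all add: S_minus_def)
  ultimately have "l * snd a + m * snd b < 0"
    using mult_nonneg_nonpos[of l "snd a"] mult_nonneg_nonpos[of m "snd b"]
      mult_pos_neg[of l "snd a"] mult_pos_neg[of m "snd b"] by linarith
  moreover have "snd (slerp a b t) = l * snd a + m * snd b"
    by (simp add: slerp_def l_def m_def \<theta>_def)
  moreover have "norm (slerp a b t) = 1"
  proof -
    have "norm a = 1" "norm b = 1" using a b by (simp_all add: S_minus_def)
    hence "min_gc_arc a b (slerp a b ` {0..\<theta>})"
      using min_gc_arc_iff_slerp[OF _ _ ab] by (simp add: \<theta>_def)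
    hence "slerp a b ` {0..\<theta>} \<subseteq> sphere 0 1"
      using min_gc_arc_subset_sphere \<open>norm a = 1\<close> by blast
    thus ?thesis using t(1) t_le by (simp add: image_subset_iff)
  qed
  ultimately show ?thesis by (simp add: S_minus_def)
qed

lemma gnomonic_slerp_image:
  assumes a: "a \<in> S_minus" and b: "b \<in> S_minus" and "a \<noteq> b"
  shows "gnomonic ` slerp a b ` {0..arccos (inner a b)} = closed_segment (gnomonic a) (gnomonic b)"
proof -
  define \<theta> where "\<theta> = arccos (inner a b)"
  define l where "l t = sin (\<theta> - t) / sin \<theta>" for t
  define m where "m t = sin t / sin \<theta>" for t
  define w where "w t = m t * snd b / (l t * snd a + m t * snd b)" for t
  have ab: "\<bar>inner a b\<bar> < 1" using abs_inner_less_one_S_minus assms by blast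
  hence \<theta>: "0 < \<theta>" "\<theta> < pi" using arccos_lt_bounded by (auto simp: \<theta>_def abs_less_iff)
  hence sin_\<theta>: "0 < sin \<theta>" by (simp add: sin_gt_zero)
  have sa: "snd a < 0" and sb: "snd b < 0" using a b by (simp_all add: S_minus_def)
  have slerp_eq: "slerp a b t = l t *\<^sub>R a + m t *\<^sub>R b" for t
    by (simp add: slerp_def l_def m_def \<theta>_def)
  have den_neg: "l t * snd a + m t * snd b < 0" if "t \<in> {0..\<theta>}" for t
    using slerp_in_S_minus[OF assms, of t] that by (simp add: S_minus_def slerp_eq \<theta>_def)
  have gnomonic_slerp: "gnomonic (slerp a b t) = (1 - w t) *\<^sub>R gnomonic a + w t *\<^sub>R gnomonic b"
    if "t \<in> {0..\<theta>}" for t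
    unfolding slerp_eq w_def using sa sb den_neg[OF that] by (intro gnomonic_add_scaleR) auto
  have w_bounds: "0 \<le> w t \<and> w t \<le> 1" if "t \<in> {0..\<theta>}" for t
  proof -
    have "0 \<le> l t" "0 \<le> m t" using that \<theta> sin_\<theta> by (simp_all add: l_def m_def sin_ge_zero)
    thus ?thesis using sa sb den_neg[OF that]
      by (simp add: w_def divide_nonpos_neg divide_le_eq mult_nonneg_nonpos)
  qed
  show ?thesis
    unfolding \<theta>_def[symmetric]
  proof
    show "gnomonic ` slerp a b ` {0..\<theta>} \<subseteq> closed_segment (gnomonic a) (gnomonic b)"
      using gnomonic_slerp w_bounds by (force simp: closed_segment_def)
  next
    show "closed_segment (gnomonic a) (gnomonic b) \<subseteq> gnomonic ` slerp a b ` {0..\<theta>}"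
    proof
      fix x assume "x \<in> closed_segment (gnomonic a) (gnomonic b)"
      then obtain r where r: "0 \<le> r" "r \<le> 1" and x: "x = (1 - r) *\<^sub>R gnomonic a + r *\<^sub>R gnomonic b"
        by (auto simp: closed_segment_def)
      have "continuous_on {0..\<theta>} w"
        unfolding w_def l_def m_def
        using sin_\<theta> den_neg[unfolded l_def m_def] by (intro continuous_intros) force+
      moreover have "w 0 = 0" "w \<theta> = 1" using sin_\<theta> sb by (simp_all add: w_def l_def m_def)
      ultimately obtain t where "t \<in> {0..\<theta>}" "w t = r"
        using IVT'[of w 0 r \<theta>] r \<theta> by auto
      thus "x \<in> gnomonic ` slerp a b ` {0..\<theta>}"
        using gnomonic_slerp x by (metis image_eqI)
    qed
  qed
qed

lemma inj_on_image_subset_iff: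
  assumes "inj_on f C" "A \<subseteq> C" "B \<subseteq> C"
  shows "f ` A \<subseteq> f ` B \<longleftrightarrow> A \<subseteq> B"
  using assms(2) inj_on_image_mem_iff[OF assms(1) _ assms(3)] by blast

lemma geod_convex_iff_convex_gnomonic:
  fixes Oms :: "((real^'n) \<times> real) set"
  assumes S: "Oms \<subseteq> S_minus"
  shows "geod_convex Oms \<longleftrightarrow> convex (gnomonic ` Oms)"
proof -
  have arc_iff_segment:
    "slerp a b ` {0..arccos (inner a b)} \<subseteq> Oms
       \<longleftrightarrow> closed_segment (gnomonic a) (gnomonic b) \<subseteq> gnomonic ` Oms"
    if "a \<in> Oms" "b \<in> Oms" "a \<noteq> b" for a b
  proof -
    have "a \<in> S_minus" "b \<in> S_minus" using that S by auto
    have "slerp a b ` {0..arccos (inner a b)} \<subseteq> S_minus"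
      using that S by (auto intro!: slerp_in_S_minus)
    hence "slerp a b ` {0..arccos (inner a b)} \<subseteq> Oms
            \<longleftrightarrow> gnomonic ` slerp a b ` {0..arccos (inner a b)} \<subseteq> gnomonic ` Oms"
      by (rule inj_on_image_subset_iff[OF inj_on_gnomonic_S_minus _ S, symmetric])
    thus ?thesis
      unfolding gnomonic_slerp_image[OF \<open>a \<in> S_minus\<close> \<open>b \<in> S_minus\<close> \<open>a \<noteq> b\<close>] .
  qed
  have "2 \<le> DIM((real^'n) \<times> real)" by simp
  moreover have "Oms \<subseteq> sphere 0 1" using S by (auto simp: S_minus_def)
  moreover have "\<forall>a\<in>Oms. - a \<notin> Oms" using S uminus_notin_S_minus by blast
  ultimately have "geod_convex Oms
          \<longleftrightarrow> (\<forall>a\<in>Oms. \<forall>b\<in>Oms. a \<noteq> b \<longrightarrow> slerp a b ` {0..arccos (inner a b)} \<subseteq> Oms)"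
    by (rule geod_convex_iff_slerp)
  also have "\<dots> \<longleftrightarrow> (\<forall>a\<in>Oms. \<forall>b\<in>Oms. closed_segment (gnomonic a) (gnomonic b) \<subseteq> gnomonic ` Oms)"
    using arc_iff_segment by (metis closed_segment_idem image_eqI singletonD subsetI)
  also have "\<dots> \<longleftrightarrow> convex (gnomonic ` Oms)"
    by (simp add: convex_contains_segment)
  finally show ?thesis .
qed

theorem proposition4p6:
  shows "(\<forall>(Oms :: ((real^'n) \<times> real) set) (Om :: (real^'n) set).
            Oms \<subseteq> S_minus \<and> Om \<noteq> {} \<longrightarrow> (c_star_convex Oms Om \<longleftrightarrow> geod_convex Oms))
       \<and> (\<forall>(Om :: (real^'n) set) (Oms :: ((real^'n) \<times> real) set).
            Oms \<subseteq> S_minus \<and> Oms \<noteq> {} \<longrightarrow> (c_convex Om Oms \<longleftrightarrow> convex Om))"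
proof (intro conjI allI impI)
  fix Oms :: "((real^'n) \<times> real) set" and Om :: "(real^'n) set"
  assume "Oms \<subseteq> S_minus \<and> Om \<noteq> {}"
  then show "c_star_convex Oms Om \<longleftrightarrow> geod_convex Oms"
    by (simp add: c_star_convex_def neg_Dx_cost_eq_gnomonic geod_convex_iff_convex_gnomonic ex_in_conv)
next
  fix Om :: "(real^'n) set" and Oms :: "((real^'n) \<times> real) set"
  assume "Oms \<subseteq> S_minus \<and> Oms \<noteq> {}"
  moreover have "snd yb \<noteq> 0" if "yb \<in> S_minus" for yb
    using that by (simp add: S_minus_def)
  ultimately show "c_convex Om Oms \<longleftrightarrow> convex Om"
    unfolding c_convex_def using convex_neg_Dy_cost_image_iff by blast
qed

end
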